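(* Let $\mathbf{M}=\{\mathbf{m}^{(1)},\ldots,\mathbf{m}^{(d)}\}$ be a blocking of $\mathcal{A}\in\mathbb{R}^{n_1\times\cdots\times n_d}$ with $\mathbf{m}^{(k)}=[m^{(k)}_1,\ldots,m^{(k)}_{b_k}]$, and suppose that for each $k$ the blocking is uniform: $m^{(k)}_1=\cdots=m^{(k)}_{b_k}=\mu_k$. For $k=1,\ldots,d$ let $N_k=n_1\cdots n_k$, $B_k=b_1\cdots b_k$, $D_k=\mu_1\cdots\mu_k$ (with $B_0=D_0=N_0=1$). Let $P_{\mathbf{M}}$ be the permutation matrix defined below. Then $P_{\mathbf{M}}=Q_d\cdots Q_2Q_1$ where \[ Q_k=\begin{cases} I_{N_d} & k=1,\\ I_{b_kN_d/N_k}\otimes \Pi_{\mu_k,B_{k-1}}\otimes I_{D_{k-1}} & 1<k\le d.\end{cases} \]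
   Context: Notation: for $\mathbf{n}=(n_1,\ldots,n_d)$ and $\mathbf{1}\le\mathbf{i}\le\mathbf{n}$ (componentwise), $\mathrm{ivec}(\mathbf{i},\mathbf{n})=i_1+(i_2-1)n_1+\cdots+(i_d-1)n_1\cdots n_{d-1}$. For positive integers $q,r$, $s=qr$, the perfect shuffle $\Pi_{q,r}\in\mathbb{R}^{s\times s}$ is the permutation matrix with $\Pi_{q,r}z=[z(1:r:s);z(2:r:s);\ldots;z(r:r:s)]$. $\otimes$ is the Kronecker product. A blocking of $\mathcal{A}$ is $\mathbf{M}=\{\mathbf{m}^{(1)},\ldots,\mathbf{m}^{(d)}\}$ with each $\mathbf{m}^{(k)}$ a vector of positive integers summing to $n_k$; for $\mathbf{M}_k=\{\mathbf{m}^{(1)},\ldots,\mathbf{m}^{(k)}\}$, $\mathrm{vol}_{\mathbf{M}_k}(\mathbf{i})=m^{(1)}_{i_1}\cdots m^{(k)}_{i_k}$. The permutation $P_{\mathbf{M}}$ is defined as $P_{\mathbf{M}}=\hat Q_d\cdots\hat Q_1$ where $\hat Q_1=I_{N_d}$ and, for $1<k\le d$, $\hat Q_k=I_{N_d/N_k}\otimes\Gamma^{(k)}$ with $\Gamma^{(k)}=\mathrm{diag}(\Gamma^{(k)}_1,\ldots,\Gamma^{(k)}_{b_k})$ and $\Gamma^{(k)}_j=\mathrm{diag}(\ldots,\Pi_{\mathrm{vol}_{\mathbf{M}_{k-1}}(\mathbf{i}),m^{(k)}_j},\ldots)\cdot\Pi_{m^{(k)}_j,N_{k-1}}$, the block diagonal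 having one block per multi-index $\mathbf{1}\le\mathbf{i}\le(b_1,\ldots,b_{k-1})$ ordered by increasing $\mathrm{ivec}(\mathbf{i},(b_1,\ldots,b_{k-1}))$. (This $P_{\mathbf{M}}$ is the permutation with $P_{\mathbf{M}}\mathrm{vec}(\mathcal{A})=\mathrm{vec}_{\mathbf{M}}(\mathcal{A})$, where $\mathrm{vec}$ lists entries in $\mathrm{ivec}$ order and $\mathrm{vec}_{\mathbf{M}}$ stacks the vecs of the blocks of $\mathcal{A}$ in $\mathrm{ivec}$ order of the block index.) *)

theory Defs
  imports "Jordan_Normal_Form.Matrix"
begin

text \<open>Conventions: modes are indexed 0..d-1 in Isabelle (paper mode k is Isabelle index k-1);
  matrix rows/columns are 0-based. A blocking M is a function giving for each mode k < d the
  list of block sizes m^(k+1).\<close>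

text \<open>Perfect shuffle Pi_{q,r}: (Pi z)(j*q + t) = z(j + t*r), for j<r, t<q (0-based).\<close>
definition perfect_shuffle :: "nat \<Rightarrow> nat \<Rightarrow> real mat" where
  "perfect_shuffle q r = mat (q*r) (q*r)
     (\<lambda>(i,j). if j = (i mod q) * r + i div q then 1 else 0)"

definition kron :: "real mat \<Rightarrow> real mat \<Rightarrow> real mat" where
  "kron A B = mat (dim_row A * dim_row B) (dim_col A * dim_col B)
     (\<lambda>(i,j). A $$ (i div dim_row B, j div dim_col B) * B $$ (i mod dim_row B, j mod dim_col B))"

definition is_blocking :: "nat \<Rightarrow> (nat \<Rightarrow> nat) \<Rightarrow> (nat \<Rightarrow> nat list) \<Rightarrow> bool" where
  "is_blocking d n M \<longleftrightarrow> (\<forall>k<d. M k \<noteq> [] \<and> (\<forall>x\<in>set (M k). 0 < x) \<and> sum_list (M k) = n k)"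

definition NN :: "(nat \<Rightarrow> nat list) \<Rightarrow> nat \<Rightarrow> nat" where
  "NN M k = (\<Prod>t<k. sum_list (M t))"

definition BB :: "(nat \<Rightarrow> nat list) \<Rightarrow> nat \<Rightarrow> nat" where
  "BB M k = (\<Prod>t<k. length (M t))"

text \<open>vol_{M_k}(i) where the multi-index i (over the first k modes) is the one with
  0-based ivec-linear index l (first index fastest).\<close>
definition vol :: "(nat \<Rightarrow> nat list) \<Rightarrow> nat \<Rightarrow> nat \<Rightarrow> nat" where
  "vol M k l = (\<Prod>t<k. M t ! ((l div BB M t) mod length (M t)))"

text \<open>Gamma^(k)_j for paper index k (1-based, mode index k-1) and 0-based block index j.\<close>
definition Gamma_blk :: "(nat \<Rightarrow> nat list) \<Rightarrow> nat \<Rightarrow> nat \<Rightarrow> real mat" where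
  "Gamma_blk M k j =
     diag_block_mat (map (\<lambda>l. perfect_shuffle (vol M (k-1) l) (M (k-1) ! j)) [0..<BB M (k-1)])
     * perfect_shuffle (M (k-1) ! j) (NN M (k-1))"

definition Gamma :: "(nat \<Rightarrow> nat list) \<Rightarrow> nat \<Rightarrow> real mat" where
  "Gamma M k = diag_block_mat (map (Gamma_blk M k) [0..<length (M (k-1))])"

definition Qhat :: "(nat \<Rightarrow> nat list) \<Rightarrow> nat \<Rightarrow> nat \<Rightarrow> real mat" where
  "Qhat M d k = (if k = 1 then 1\<^sub>m (NN M d)
                 else kron (1\<^sub>m (NN M d div NN M k)) (Gamma M k))"

fun mat_prod_desc :: "nat \<Rightarrow> (nat \<Rightarrow> real mat) \<Rightarrow> nat \<Rightarrow> real mat" where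
  "mat_prod_desc s F 0 = 1\<^sub>m s"
| "mat_prod_desc s F (Suc k) = F (Suc k) * mat_prod_desc s F k"

definition P_M :: "(nat \<Rightarrow> nat list) \<Rightarrow> nat \<Rightarrow> real mat" where
  "P_M M d = mat_prod_desc (NN M d) (Qhat M d) d"

definition Q_unif :: "(nat \<Rightarrow> nat list) \<Rightarrow> (nat \<Rightarrow> nat) \<Rightarrow> nat \<Rightarrow> nat \<Rightarrow> real mat" where
  "Q_unif M mu d k = (if k = 1 then 1\<^sub>m (NN M d)
     else kron (kron (1\<^sub>m (length (M (k-1)) * NN M d div NN M k))
                     (perfect_shuffle (mu (k-1)) (BB M (k-1))))
               (1\<^sub>m (\<Prod>t<k-1. mu t)))"

end

theory Submission
  imports Defs
begin

text \<open>For a uniform blocking all volumes vol_{M_{k-1}}(i) equal D_{k-1} and N_{k-1} = B_{k-1} D_{k-1},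
  so every block \<Gamma>^(k)_j equals (I_B \<otimes> \<Pi>_{D,\<mu>}) \<Pi>_{\<mu>,BD} with B = B_{k-1}, D = D_{k-1} and
  \<mu> = \<mu>_k. Both factors are permutation matrices; reading a row index in mixed radix as
  a + D (c + \<mu> e) with a < D and c < \<mu>, the product sends it to (c B + e) D + a, so it is
  \<Pi>_{\<mu>,B} \<otimes> I_D. Hence \<Gamma>^(k) = I_{b_k} \<otimes> \<Pi>_{\<mu>,B} \<otimes> I_D, and hat-Q_k = Q_k follows from
  associativity of \<otimes> and I_a \<otimes> I_b = I_{ab}.\<close>

lemma dim_kron [simp]:
  "dim_row (kron A B) = dim_row A * dim_row B"
  "dim_col (kron A B) = dim_col A * dim_col B"
  unfolding kron_def by simp_all

lemma index_kron [simp]: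
  "i < dim_row A * dim_row B \<Longrightarrow> j < dim_col A * dim_col B \<Longrightarrow>
   kron A B $$ (i, j) = A $$ (i div dim_row B, j div dim_col B) * B $$ (i mod dim_row B, j mod dim_col B)"
  unfolding kron_def by simp

lemma mod_mult_div_eq_div_mod: "(i::nat) mod (b * c) div c = i div c mod b"
  by (cases "c = 0") (simp_all add: mod_mult2_eq mult.commute[of b])

lemma div_mult_swap_eq: "(i::nat) div (b * c) = i div c div b"
  by (metis div_mult2_eq mult.commute)

lemma kron_assoc: "kron (kron A B) C = kron A (kron B C)"
proof (rule eq_matI)
  fix i j
  assume "i < dim_row (kron A (kron B C))" "j < dim_col (kron A (kron B C))"
  then have i: "i < dim_row A * dim_row B * dim_row C" and j: "j < dim_col A * dim_col B * dim_col C"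
    by (simp_all add: mult.assoc)
  then have "0 < dim_row A * dim_row B * dim_row C" "0 < dim_col A * dim_col B * dim_col C"
    by linarith+
  then have "0 < dim_row B * dim_row C" "0 < dim_col B * dim_col C"
    by simp_all
  then have "i mod (dim_row B * dim_row C) < dim_row B * dim_row C"
    "j mod (dim_col B * dim_col C) < dim_col B * dim_col C"
    by simp_all
  moreover have "i div dim_row C < dim_row A * dim_row B" "j div dim_col C < dim_col A * dim_col B"
    using i j by (simp_all add: less_mult_imp_div_less)
  ultimately show "kron (kron A B) C $$ (i, j) = kron A (kron B C) $$ (i, j)"
    using i j by (simp add: div_mult_swap_eq mod_mult_div_eq_div_mod mod_mod_cancel mult.assoc)
qed simp_all

lemma kron_one_left_index:
  assumes "i < m * dim_row A" "j < m * dim_col A"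
  shows "kron (1\<^sub>m m) A $$ (i, j) =
    (if i div dim_row A = j div dim_col A then A $$ (i mod dim_row A, j mod dim_col A) else 0)"
  using assms by (simp add: less_mult_imp_div_less)

lemma diag_block_mat_replicate: "diag_block_mat (replicate m A) = kron (1\<^sub>m m) A"
proof (induction m)
  case 0
  show ?case by (rule eq_matI) simp_all
next
  case (Suc m)
  let ?r = "dim_row A" and ?c = "dim_col A"
  show ?case
  proof (rule eq_matI)
    fix i j
    assume "i < dim_row (kron (1\<^sub>m (Suc m)) A)" "j < dim_col (kron (1\<^sub>m (Suc m)) A)"
    then have i': "i < Suc m * ?r" and j': "j < Suc m * ?c" by simp_all
    then have i: "i < ?r + m * ?r" and j: "j < ?c + m * ?c" by simp_all
    have r: "0 < ?r" using i by (cases "?r = 0") simp_all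
    have c: "0 < ?c" using j by (cases "?c = 0") simp_all
    have "diag_block_mat (replicate (Suc m) A) $$ (i, j) =
      (if i < ?r then if j < ?c then A $$ (i, j) else 0
       else if j < ?c then 0 else kron (1\<^sub>m m) A $$ (i - ?r, j - ?c))"
      using i j by (simp add: Suc Let_def)
    also have "\<dots> = (if i div ?r = j div ?c then A $$ (i mod ?r, j mod ?c) else 0)"
    proof (cases "i < ?r \<or> j < ?c")
      case True
      with r c show ?thesis by (auto simp: div_eq_0_iff)
    next
      case False
      then have "(i - ?r) div ?r = i div ?r - 1" "(i - ?r) mod ?r = i mod ?r"
        "(j - ?c) div ?c = j div ?c - 1" "(j - ?c) mod ?c = j mod ?c"
        "i div ?r \<noteq> 0" "j div ?c \<noteq> 0"
        using r c by (simp_all add: le_div_geq le_mod_geq div_eq_0_iff)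
      moreover have "i - ?r < m * ?r" "j - ?c < m * ?c" using False i j by linarith+
      ultimately show ?thesis
        using False by (simp add: kron_one_left_index del: index_kron) arith
    qed
    also have "\<dots> = kron (1\<^sub>m (Suc m)) A $$ (i, j)"
      using kron_one_left_index[OF i' j'] by simp
    finally show "diag_block_mat (replicate (Suc m) A) $$ (i, j) = kron (1\<^sub>m (Suc m)) A $$ (i, j)" .
  qed (simp_all add: Let_def Suc)
qed

lemma kron_one_one: "kron (1\<^sub>m a) (1\<^sub>m b) = 1\<^sub>m (a * b)"
proof (rule eq_matI)
  fix i j assume "i < dim_row (1\<^sub>m (a * b))" "j < dim_col (1\<^sub>m (a * b))"
  then have i: "i < a * b" and j: "j < a * b" by simp_all
  then have "0 < b" by (cases "b = 0") simp_all
  moreover have "i = j \<longleftrightarrow> i div b = j div b \<and> i mod b = j mod b"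
    by (metis div_mult_mod_eq)
  ultimately show "kron (1\<^sub>m a) (1\<^sub>m b) $$ (i, j) = 1\<^sub>m (a * b) $$ (i, j)"
    using i j by (simp add: less_mult_imp_div_less)
qed simp_all

lemma kron_one_kron_one: "kron (1\<^sub>m a) (kron (1\<^sub>m b) A) = kron (1\<^sub>m (a * b)) A"
  by (simp add: kron_assoc[symmetric] kron_one_one)

definition perm_mat :: "nat \<Rightarrow> (nat \<Rightarrow> nat) \<Rightarrow> real mat" where
  "perm_mat n f = mat n n (\<lambda>(i, j). if j = f i then 1 else 0)"

lemma dim_perm_mat [simp]: "dim_row (perm_mat n f) = n" "dim_col (perm_mat n f) = n"
  unfolding perm_mat_def by simp_all

lemma index_perm_mat [simp]: "i < n \<Longrightarrow> j < n \<Longrightarrow> perm_mat n f $$ (i, j) = (if j = f i then 1 else 0)"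
  unfolding perm_mat_def by simp

lemma perm_mat_cong: "(\<And>i. i < n \<Longrightarrow> f i = g i) \<Longrightarrow> perm_mat n f = perm_mat n g"
  by (rule eq_matI) simp_all

lemma one_mat_eq_perm_mat: "1\<^sub>m n = perm_mat n (\<lambda>i. i)"
  by (rule eq_matI) auto

lemma perfect_shuffle_eq_perm_mat: "perfect_shuffle q r = perm_mat (q * r) (\<lambda>i. i mod q * r + i div q)"
  unfolding perfect_shuffle_def perm_mat_def by simp

lemma perfect_shuffle_index_less: "(i::nat) < q * r \<Longrightarrow> i mod q * r + i div q < q * r"
proof -
  assume i: "i < q * r"
  then have "i div q < r" by (simp add: less_mult_imp_div_less mult.commute)
  moreover have "i mod q + 1 \<le> q" using i by (cases "q = 0") (simp_all add: Suc_leI)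
  ultimately have "i mod q * r + i div q < (i mod q + 1) * r" by simp
  also have "\<dots> \<le> q * r" using \<open>i mod q + 1 \<le> q\<close> by (rule mult_right_mono) simp
  finally show ?thesis .
qed

lemma kron_index_less:
  assumes "\<And>i. i < a \<Longrightarrow> f i < a" "\<And>i. i < b \<Longrightarrow> g i < b" "(i::nat) < a * b"
  shows "f (i div b) * b + g (i mod b) < a * b"
proof -
  have b: "0 < b" using assms(3) by (cases "b = 0") simp_all
  then have "f (i div b) + 1 \<le> a" using assms by (simp add: less_mult_imp_div_less Suc_leI)
  moreover have "f (i div b) * b + g (i mod b) < (f (i div b) + 1) * b" using assms(2) b by simp
  ultimately show ?thesis by (meson le_less_trans mult_le_mono1 not_le)
qed

lemma kron_perm_mat:
  assumes "\<And>i. i < b \<Longrightarrow> g i < b"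
  shows "kron (perm_mat a f) (perm_mat b g) = perm_mat (a * b) (\<lambda>i. f (i div b) * b + g (i mod b))"
proof (rule eq_matI)
  fix i j assume "i < dim_row (perm_mat (a * b) (\<lambda>i. f (i div b) * b + g (i mod b)))"
    "j < dim_col (perm_mat (a * b) (\<lambda>i. f (i div b) * b + g (i mod b)))"
  then have i: "i < a * b" and j: "j < a * b" by simp_all
  then have b: "0 < b" by (cases "b = 0") simp_all
  then have "g (i mod b) < b" using assms by simp
  then have "j = f (i div b) * b + g (i mod b) \<longleftrightarrow> j div b = f (i div b) \<and> j mod b = g (i mod b)"
    by (auto simp: b) (metis div_mult_mod_eq)
  with i j b show "kron (perm_mat a f) (perm_mat b g) $$ (i, j) =
      perm_mat (a * b) (\<lambda>i. f (i div b) * b + g (i mod b)) $$ (i, j)"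
    by (simp add: less_mult_imp_div_less)
qed simp_all

lemma perm_mat_mult:
  assumes "\<And>i. i < n \<Longrightarrow> f i < n"
  shows "perm_mat n f * perm_mat n g = perm_mat n (\<lambda>i. g (f i))"
proof (rule eq_matI)
  fix i j assume "i < dim_row (perm_mat n (\<lambda>i. g (f i)))" "j < dim_col (perm_mat n (\<lambda>i. g (f i)))"
  then have i: "i < n" and j: "j < n" by simp_all
  have "(perm_mat n f * perm_mat n g) $$ (i, j) = (\<Sum>k<n. perm_mat n f $$ (i, k) * perm_mat n g $$ (k, j))"
    using i j by (simp add: scalar_prod_def atLeast0LessThan)
  also have "\<dots> = (\<Sum>k<n. if k = f i then perm_mat n g $$ (k, j) else 0)"
    using i by (intro sum.cong) simp_all
  also have "\<dots> = perm_mat n (\<lambda>i. g (f i)) $$ (i, j)"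
    using i j assms[OF i] by simp
  finally show "(perm_mat n f * perm_mat n g) $$ (i, j) = perm_mat n (\<lambda>i. g (f i)) $$ (i, j)" .
qed simp_all

lemma perfect_shuffle_index_digits:
  "(x::nat) < q \<Longrightarrow> (x + q * y) mod q * r + (x + q * y) div q = x * r + y"
  by simp

lemma block_shuffle_index:
  fixes i D m :: nat
  shows "i div (D * m) * (D * m) + (i mod (D * m) mod D * m + i mod (D * m) div D) =
    i div D mod m + m * (i mod D + D * (i div D div m))"
proof (cases "D = 0 \<or> m = 0")
  case False
  define a c e where "a = i mod D" and "c = i div D mod m" and "e = i div D div m"
  have a: "a < D" and c: "c < m" using False by (simp_all add: a_def c_def)
  have "a + D * c < D * (c + 1)" using a by simp
  also have "\<dots> \<le> D * m" using c by (intro mult_le_mono2) simp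
  finally have low: "a + D * c < D * m" .
  have "i = a + D * (c + m * e)" unfolding a_def c_def e_def by simp
  then have "i = (a + D * c) + (D * m) * e" by (simp add: algebra_simps)
  then have "i mod (D * m) = a + D * c" "i div (D * m) = e"
    using low False by (simp_all add: div_mult_self2)
  then show ?thesis
    using perfect_shuffle_index_digits[OF a, of c m] by (simp add: a_def c_def e_def algebra_simps)
qed auto

lemma kron_one_perfect_shuffle_mult:
  "kron (1\<^sub>m B) (perfect_shuffle D m) * perfect_shuffle m (B * D) = kron (perfect_shuffle m B) (1\<^sub>m D)"
proof -
  let ?n = "B * (D * m)"
  let ?f = "\<lambda>i. i div (D * m) * (D * m) + (i mod (D * m) mod D * m + i mod (D * m) div D)"
  have f: "?f i < ?n" if "i < ?n" for i
    using kron_index_less[of B "\<lambda>i. i" "D * m" "\<lambda>i. i mod D * m + i div D", OF _ _ that]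
    by (simp add: perfect_shuffle_index_less)
  have "kron (1\<^sub>m B) (perfect_shuffle D m) = perm_mat ?n ?f"
    unfolding one_mat_eq_perm_mat perfect_shuffle_eq_perm_mat
    by (rule kron_perm_mat[OF perfect_shuffle_index_less])
  moreover have "perfect_shuffle m (B * D) = perm_mat ?n (\<lambda>i. i mod m * (B * D) + i div m)"
    by (simp add: perfect_shuffle_eq_perm_mat ac_simps)
  ultimately have "kron (1\<^sub>m B) (perfect_shuffle D m) * perfect_shuffle m (B * D) =
      perm_mat ?n ?f * perm_mat ?n (\<lambda>i. i mod m * (B * D) + i div m)"
    by simp
  also have "\<dots> = perm_mat ?n (\<lambda>i. ?f i mod m * (B * D) + ?f i div m)"
    using f by (rule perm_mat_mult)
  also have "\<dots> = perm_mat ?n (\<lambda>i. (i div D mod m * B + i div D div m) * D + i mod D)"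
  proof (rule perm_mat_cong)
    fix i assume "i < ?n"
    then have "i div D mod m < m" by (cases "m = 0") simp_all
    from perfect_shuffle_index_digits[OF this, of "i mod D + D * (i div D div m)" "B * D"]
    show "?f i mod m * (B * D) + ?f i div m = (i div D mod m * B + i div D div m) * D + i mod D"
      unfolding block_shuffle_index by (simp add: algebra_simps)
  qed
  also have "\<dots> = kron (perfect_shuffle m B) (1\<^sub>m D)"
    by (simp add: one_mat_eq_perm_mat perfect_shuffle_eq_perm_mat kron_perm_mat ac_simps)
  finally show ?thesis .
qed

definition uniform_blocking :: "(nat \<Rightarrow> nat list) \<Rightarrow> (nat \<Rightarrow> nat) \<Rightarrow> nat \<Rightarrow> bool" where
  "uniform_blocking M mu d \<longleftrightarrow> (\<forall>k<d. set (M k) = {mu k})"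

lemma uniform_blockingI:
  assumes "is_blocking d n M" "\<forall>k<d. \<forall>j<length (M k). M k ! j = mu k"
  shows "uniform_blocking M mu d"
  using assms unfolding uniform_blocking_def is_blocking_def
  by (auto simp: in_set_conv_nth) (metis length_greater_0_conv nth_mem)

lemma uniform_blocking_mono: "uniform_blocking M mu d \<Longrightarrow> k \<le> d \<Longrightarrow> uniform_blocking M mu k"
  unfolding uniform_blocking_def by simp

lemma uniform_blocking_replicate:
  "uniform_blocking M mu d \<Longrightarrow> t < d \<Longrightarrow> M t = replicate (length (M t)) (mu t)"
  unfolding uniform_blocking_def by (simp add: replicate_length_same)

lemma uniform_blocking_nth:
  "uniform_blocking M mu d \<Longrightarrow> t < d \<Longrightarrow> j < length (M t) \<Longrightarrow> M t ! j = mu t"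
  unfolding uniform_blocking_def using nth_mem by blast

lemma uniform_blocking_nonempty: "uniform_blocking M mu d \<Longrightarrow> t < d \<Longrightarrow> M t \<noteq> []"
  unfolding uniform_blocking_def by force

lemma NN_uniform: "uniform_blocking M mu k \<Longrightarrow> NN M k = BB M k * (\<Prod>t<k. mu t)"
proof -
  assume uniform: "uniform_blocking M mu k"
  have "sum_list (M t) = length (M t) * mu t" if "t < k" for t
    using sum_list_replicate[of "length (M t)" "mu t"] uniform_blocking_replicate[OF uniform that]
    by simp
  then show ?thesis
    unfolding NN_def BB_def prod.distrib[symmetric] by (intro prod.cong) simp_all
qed

lemma vol_uniform: "uniform_blocking M mu k \<Longrightarrow> vol M k l = (\<Prod>t<k. mu t)"
  unfolding vol_def
  by (intro prod.cong refl uniform_blocking_nth) (simp_all add: uniform_blocking_nonempty)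

lemma NN_dvd: "k \<le> d \<Longrightarrow> NN M k dvd NN M d"
  unfolding NN_def by (simp add: prod_dvd_prod_subset)

lemma Gamma_blk_uniform:
  assumes "uniform_blocking M mu (Suc k)" "j < length (M k)"
  shows "Gamma_blk M (Suc k) j = kron (perfect_shuffle (mu k) (BB M k)) (1\<^sub>m (\<Prod>t<k. mu t))"
proof -
  have "M k ! j = mu k" using assms by (simp add: uniform_blocking_nth)
  moreover have "vol M k l = (\<Prod>t<k. mu t)" "NN M k = BB M k * (\<Prod>t<k. mu t)" for l
    using uniform_blocking_mono[OF assms(1)] by (simp_all add: vol_uniform NN_uniform)
  ultimately show ?thesis
    unfolding Gamma_blk_def
    by (simp add: map_replicate_const diag_block_mat_replicate kron_one_perfect_shuffle_mult)
qed

lemma Gamma_uniform: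
  assumes "uniform_blocking M mu (Suc k)"
  shows "Gamma M (Suc k) =
    kron (1\<^sub>m (length (M k))) (kron (perfect_shuffle (mu k) (BB M k)) (1\<^sub>m (\<Prod>t<k. mu t)))"
proof -
  have "map (Gamma_blk M (Suc k)) [0..<length (M k)] =
      replicate (length (M k)) (kron (perfect_shuffle (mu k) (BB M k)) (1\<^sub>m (\<Prod>t<k. mu t)))"
    using Gamma_blk_uniform[OF assms] by (intro nth_equalityI) simp_all
  then show ?thesis unfolding Gamma_def by (simp add: diag_block_mat_replicate)
qed

lemma Qhat_eq_Q_unif:
  assumes "uniform_blocking M mu d" "1 < k" "k \<le> d"
  shows "Qhat M d k = Q_unif M mu d k"
proof -
  obtain j where k: "k = Suc j" using assms(2) by (cases k) simp_all
  let ?R = "NN M d div NN M k"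
  have "length (M j) * NN M d div NN M k = ?R * length (M j)"
    using NN_dvd[OF assms(3)] by (simp add: div_mult_swap mult.commute)
  moreover have "Gamma M k =
      kron (1\<^sub>m (length (M j))) (kron (perfect_shuffle (mu j) (BB M j)) (1\<^sub>m (\<Prod>t<j. mu t)))"
    using Gamma_uniform uniform_blocking_mono[OF assms(1,3)] k by simp
  ultimately show ?thesis
    using assms(2) unfolding Qhat_def Q_unif_def k by (simp add: kron_one_kron_one kron_assoc)
qed

lemma mat_prod_desc_cong:
  "(\<And>j. 1 \<le> j \<Longrightarrow> j \<le> k \<Longrightarrow> F j = G j) \<Longrightarrow> mat_prod_desc s F k = mat_prod_desc s G k"
  by (induction k) auto

theorem corollary3p2:
  fixes d :: nat and n :: "nat \<Rightarrow> nat" and M :: "nat \<Rightarrow> nat list" and mu :: "nat \<Rightarrow> nat"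
  assumes "is_blocking d n M"
    and "\<forall>k<d. \<forall>j<length (M k). M k ! j = mu k"
  shows "P_M M d = mat_prod_desc (NN M d) (Q_unif M mu d) d"
proof -
  have "uniform_blocking M mu d" using assms by (rule uniform_blockingI)
  then have "Qhat M d k = Q_unif M mu d k" if "1 \<le> k" "k \<le> d" for k
    using that Qhat_eq_Q_unif[of M mu d k] by (cases "k = 1") (simp_all add: Qhat_def Q_unif_def)
  then show ?thesis unfolding P_M_def by (rule mat_prod_desc_cong)
qed

end
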